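(* Let $m\in\mathbb{Z}_2\setminus\{0\}$ and $f(x)=x^2+(1-4m)x$ on $\mathbb{Z}_2$. Then $f$ has the two fixed points $0$ and $4m$, $f(1+2\mathbb{Z}_2)\subset 2\mathbb{Z}_2$, and $$2\mathbb{Z}_2=\{0,4m\}\sqcup E_1\sqcup E_2\sqcup E_3,$$ where $$E_1=\bigsqcup_{2\le n<v_2(m)+3}\big(2^{n-1}+2^n\mathbb{Z}_2\big)-\{\text{I-}[n-2]\},$$ $$E_2=\bigsqcup_{n>v_2(m)+3}\big(2^{n-1}+2^n\mathbb{Z}_2\big)-\{\text{I-}[v_2(m)+1]\},$$ $$E_3=\bigsqcup_{n>v_2(m)+3}\big(4m+2^{n-1}+2^n\mathbb{Z}_2\big)-\{\text{I-}[v_2(m)+1]\}.$$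
   Context: $v_2$ is the $2$-adic valuation. For $n\ge1$, $f_n:\mathbb{Z}/2^n\mathbb{Z}\to\mathbb{Z}/2^n\mathbb{Z}$ is the induced map $f_n(x\bmod 2^n)=f(x)\bmod 2^n$. A cycle of $f_n$ (at level $n$) of length $k$ is a tuple $\sigma=(x_1,\dots,x_k)$ of distinct elements with $f_n(x_i)=x_{i+1}$ ($i<k$), $f_n(x_k)=x_1$. The set $X_\sigma=\{y\in\mathbb{Z}/2^{n+1}\mathbb{Z}: y\bmod 2^n\in\sigma\}$ is $f_{n+1}$-invariant; the cycles of $f_{n+1}$ in $X_\sigma$ are the lifts of $\sigma$. $\sigma$ grows if $X_\sigma$ is a single cycle of length $2k$, and splits if $X_\sigma$ is the union of two cycles of length $k$. For $k\ge0$, $\sigma$ "splits $k$ times and then its lifts grow forever" means: every cycle at level $n+j$, $0\le j\le k-1$, lying above $\sigma$ (i.e. reducing mod $2^n$ into $\sigma$) splits, and every cycle at any level $\ge n+k$ lying above $\sigma$ grows. A ball $F=x+2^n\mathbb{Z}_2$ with $(x\bmod 2^n)$ a fixed point (1-cycle) of $f_n$ is of type I-$[k]$ if this 1-cycle splits $k$ times and then its lifts grow forever (then $F$ is a disjoint union of $2^k$ balls of radius $2^{-n-k}$, each $f$-invariant with $f$ minimal on it). The notation $E=\bigsqcup_{n\in J}F_n-\{\text{I-}[k]\}$ means $E$ is the disjoint union of the sets $F_n$, each of which is of type I-$[k]$ (with $k$ possibly depending on $n$ as indicated). *)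

theory Defs
  imports Main "HOL-Library.Disjoint_Sets"
begin

text \<open>A 2-adic integer is represented by its compatible sequence of residues:
  the n-th component is its reduction mod 2^n, taken in {0..<2^n}.\<close>

typedef z2 = "{x :: nat \<Rightarrow> int. \<forall>n. 0 \<le> x n \<and> x n < 2^n \<and> x (Suc n) mod 2^n = x n}"
  morphisms red Abs_z2
  by (rule exI[of _ "\<lambda>_. 0"]) auto

setup_lifting type_definition_z2

lemma mod_pow_Suc_mod: "(a::int) mod 2^(Suc n) mod 2^n = a mod 2^n"
  by (simp add: mod_mod_cancel)

lift_definition zero_z2' :: z2 is "\<lambda>n. 0" by auto
lift_definition one_z2' :: z2 is "\<lambda>n. 1 mod 2^n"
  apply (intro allI conjI)
    apply simp
   apply simp
  apply (rule mod_pow_Suc_mod)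
  done
lift_definition plus_z2' :: "z2 \<Rightarrow> z2 \<Rightarrow> z2" is "\<lambda>x y n. (x n + y n) mod 2^n"
apply (intro allI conjI)
    apply simp
   apply simp
  subgoal premises p for x y n
    using p by (metis mod_pow_Suc_mod mod_add_eq)
  done
lift_definition times_z2' :: "z2 \<Rightarrow> z2 \<Rightarrow> z2" is "\<lambda>x y n. (x n * y n) mod 2^n"
apply (intro allI conjI)
    apply simp
   apply simp
  subgoal premises p for x y n
    using p by (metis mod_pow_Suc_mod mod_mult_eq)
  done
lift_definition uminus_z2' :: "z2 \<Rightarrow> z2" is "\<lambda>x n. (- x n) mod 2^n"
apply (intro allI conjI)
    apply simp
   apply simp
  subgoal premises p for x n
    using p by (metis mod_pow_Suc_mod mod_minus_eq)
  done

instantiation z2 :: comm_ring_1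
begin
definition "0 = zero_z2'"
definition "1 = one_z2'"
definition "x + y = plus_z2' x y"
definition "x * y = times_z2' x y"
definition "- x = uminus_z2' x"
definition "x - y = plus_z2' x (uminus_z2' y)"

lemma red_inject': "x = y \<longleftrightarrow> (\<forall>n. red x n = red y n)" for x y :: z2
  by (metis red_inject ext)

lemma red_range: "0 \<le> red x n \<and> red x n < 2^n"
  using red[of x] by auto

lemma red_0: "red x 0 = 0"
  using red_range[of x 0] by simp

instance
proof
  fix a b c :: z2
  show "a * b * c = a * (b * c)"
    unfolding times_z2_def red_inject' times_z2'.rep_eq
    by (simp add: mod_mult_left_eq mod_mult_right_eq mult.assoc)
  show "a * b = b * a"
    unfolding times_z2_def red_inject' times_z2'.rep_eq by (simp add: mult.commute)
  show "1 * a = a"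
    unfolding times_z2_def one_z2_def red_inject' times_z2'.rep_eq one_z2'.rep_eq
    apply (simp add: mod_mult_left_eq red_range)
    using red_0 neq0_conv by blast
  show "a + b + c = a + (b + c)"
    unfolding plus_z2_def red_inject' plus_z2'.rep_eq
    by (simp add: mod_add_left_eq mod_add_right_eq add.assoc)
  show "a + b = b + a"
    unfolding plus_z2_def red_inject' plus_z2'.rep_eq by (simp add: add.commute)
  show "0 + a = a"
    unfolding plus_z2_def zero_z2_def red_inject' plus_z2'.rep_eq zero_z2'.rep_eq
    by (simp add: red_range)
  show "- a + a = 0"
    unfolding plus_z2_def uminus_z2_def zero_z2_def red_inject' plus_z2'.rep_eq
      uminus_z2'.rep_eq zero_z2'.rep_eq
    by (simp add: mod_add_left_eq)
  show "a - b = a + - b"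
    unfolding minus_z2_def plus_z2_def uminus_z2_def ..
  show "(a + b) * c = a * c + b * c"
    unfolding plus_z2_def times_z2_def red_inject' plus_z2'.rep_eq times_z2'.rep_eq
    by (simp add: mod_mult_left_eq mod_add_eq distrib_right)
  show "(0::z2) \<noteq> 1"
  proof
    assume "(0::z2) = 1"
    then have "red zero_z2' 1 = red one_z2' 1" unfolding zero_z2_def one_z2_def by simp
    then show False unfolding zero_z2'.rep_eq one_z2'.rep_eq by simp
  qed
qed
end

text \<open>2-adic valuation (for nonzero x).\<close>
definition v2 :: "z2 \<Rightarrow> nat" where
  "v2 x = (GREATEST k. (2::z2)^k dvd x)"

definition ball2 :: "z2 \<Rightarrow> nat \<Rightarrow> z2 set" where
  "ball2 c n = {y. red y n = red c n}"

definition induced :: "(z2 \<Rightarrow> z2) \<Rightarrow> nat \<Rightarrow> int \<Rightarrow> int" where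
  "induced f n a = red (f (of_int a)) n"

definition is_cycle :: "('a \<Rightarrow> 'a) \<Rightarrow> 'a set \<Rightarrow> bool" where
  "is_cycle h S \<longleftrightarrow> finite S \<and> S \<noteq> {} \<and>
     (\<exists>x\<in>S. (h ^^ card S) x = x \<and> S = (\<lambda>i. (h ^^ i) x) ` {..<card S})"

definition level_cycle :: "(z2 \<Rightarrow> z2) \<Rightarrow> nat \<Rightarrow> int set \<Rightarrow> bool" where
  "level_cycle f n S \<longleftrightarrow> S \<subseteq> {0..<2^n} \<and> is_cycle (induced f n) S"

definition lift_set :: "nat \<Rightarrow> int set \<Rightarrow> int set" where
  "lift_set n S = {y \<in> {0..<2^(Suc n)}. y mod 2^n \<in> S}"

definition grows :: "(z2 \<Rightarrow> z2) \<Rightarrow> nat \<Rightarrow> int set \<Rightarrow> bool" where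
  "grows f n S \<longleftrightarrow> level_cycle f (Suc n) (lift_set n S) \<and> card (lift_set n S) = 2 * card S"

definition splits :: "(z2 \<Rightarrow> z2) \<Rightarrow> nat \<Rightarrow> int set \<Rightarrow> bool" where
  "splits f n S \<longleftrightarrow> (\<exists>A B. level_cycle f (Suc n) A \<and> level_cycle f (Suc n) B \<and>
      card A = card S \<and> card B = card S \<and> A \<inter> B = {} \<and> A \<union> B = lift_set n S)"

definition splits_then_grows :: "(z2 \<Rightarrow> z2) \<Rightarrow> nat \<Rightarrow> int set \<Rightarrow> nat \<Rightarrow> bool" where
  "splits_then_grows f n S k \<longleftrightarrow>
     (\<forall>j<k. \<forall>T. level_cycle f (n + j) T \<and> (\<forall>y\<in>T. y mod 2^n \<in> S) \<longrightarrow> splits f (n + j) T) \<and>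
     (\<forall>N\<ge>n + k. \<forall>T. level_cycle f N T \<and> (\<forall>y\<in>T. y mod 2^n \<in> S) \<longrightarrow> grows f N T)"

definition typeI :: "(z2 \<Rightarrow> z2) \<Rightarrow> z2 \<Rightarrow> nat \<Rightarrow> nat \<Rightarrow> bool" where
  "typeI f c n k \<longleftrightarrow> induced f n (red c n) = red c n \<and> splits_then_grows f n {red c n} k"

end

theory Submission
  imports Defs "HOL-Computational_Algebra.Primes"
begin

text \<open>Suppose that on a ball \<open>c + 2^n\<int>\<^sub>2\<close> the displacement \<open>f x - x\<close> has constant
  valuation \<open>K \<ge> n\<close> and all difference quotients of \<open>f\<close> are \<open>1 mod 4\<close>. Then
  \<open>f^(2^j) x - x\<close> has valuation exactly \<open>K + j\<close>, so modulo \<open>2^N\<close> with \<open>N \<ge> K\<close> every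
  orbit has exact period \<open>2^(N-K)\<close> and fills a residue class mod \<open>2^K\<close>, while below level
  \<open>K\<close> every point is fixed: the ball is of type I-[\<open>K - n\<close>].
  For \<open>f x = x^2 + (1 - 4m) x\<close> one has \<open>f x - x = x (x - 4m)\<close>, and on each ball making up
  \<open>E1\<close>, \<open>E2\<close>, \<open>E3\<close> the ultrametric inequality shows that \<open>v2 x + v2 (x - 4m)\<close> is constant.\<close>

lemma red_plus: "red (x + y) n = (red x n + red y n) mod 2^n"
  by (simp add: plus_z2_def plus_z2'.rep_eq)

lemma red_times: "red (x * y) n = (red x n * red y n) mod 2^n"
  by (simp add: times_z2_def times_z2'.rep_eq)

lemma red_minus: "red (x - y) n = (red x n - red y n) mod 2^n"
  by (simp add: minus_z2_def plus_z2'.rep_eq uminus_z2'.rep_eq mod_add_right_eq)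

lemma red_mod [simp]: "red x n mod 2^n = red x n"
  using red_range[of x n] by simp

lemma red_mod_le: "k \<le> n \<Longrightarrow> red x n mod 2^k = red x k"
proof (induction n)
  case (Suc n)
  show ?case
  proof (cases "k \<le> n")
    case True
    then have "red x (Suc n) mod 2^k = red x (Suc n) mod 2^n mod 2^k"
      by (simp add: mod_mod_cancel le_imp_power_dvd)
    with Suc True red[of x] show ?thesis by simp
  qed (use Suc.prems red_mod in \<open>metis le_Suc_eq\<close>)
qed (simp add: red_0)

lemma red_of_int: "red (of_int z) n = z mod 2^n"
proof (induction z rule: int_induct[where k = 0])
  case base
  then show ?case by (simp add: zero_z2_def zero_z2'.rep_eq)
next
  case (step1 i)
  then show ?case
    using mod_add_left_eq[of i "2^n" 1] by (simp add: red_plus one_z2_def one_z2'.rep_eq)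
next
  case (step2 i)
  then show ?case
    using mod_diff_left_eq[of i "2^n" 1] by (simp add: red_minus one_z2_def one_z2'.rep_eq)
qed

lemma red_pow2: "red ((2::z2)^k) n = 2^k mod 2^n"
  using red_of_int[of "2^k" n] by simp

lemma red_eq_iff_dvd: "red x n = red y n \<longleftrightarrow> (2::z2)^n dvd (x - y)"
proof
  assume "(2::z2)^n dvd (x - y)"
  then obtain s where "x - y = 2^n * s" by blast
  then have "red (x - y) n = 0" by (simp add: red_times red_pow2)
  then show "red x n = red y n"
    by (simp add: red_minus mod_eq_dvd_iff[symmetric] dvd_eq_mod_eq_0[symmetric])
next
  assume eq: "red x n = red y n"
  define s where "s k = red (x - y) (k + n) div 2^n" for k
  have dvd: "red (x - y) (k + n) = 2^n * s k" for k
  proof -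
    have "red (x - y) (k + n) mod 2^n = 0"
      using red_mod_le[of n "k + n" "x - y"] eq by (simp add: red_minus)
    then show ?thesis unfolding s_def by auto
  qed
  have "s \<in> {s. \<forall>k. 0 \<le> s k \<and> s k < 2^k \<and> s (Suc k) mod 2^k = s k}"
  proof (intro CollectI allI conjI)
    fix k
    have "2^n * s k < 2^n * 2^k" "0 \<le> 2^n * s k"
      using red_range[of "x - y" "k + n"] by (simp_all add: dvd power_add mult.commute)
    then show "0 \<le> s k" "s k < 2^k" by (simp_all add: zero_le_mult_iff)
    have "red (x - y) (Suc (k + n)) mod 2^(k + n) = red (x - y) (k + n)"
      using red[of "x - y"] by blast
    then have "2^n * (s (Suc k) mod 2^k) = 2^n * s k"
      using dvd[of k] dvd[of "Suc k"] by (simp add: mod_mult_mult1 power_add mult.commute)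
    then show "s (Suc k) mod 2^k = s k" by simp
  qed
  then have rep: "red (Abs_z2 s) = s" by (rule Abs_z2_inverse)
  have "x - y = 2^n * Abs_z2 s"
  proof (subst red_inject', intro allI)
    fix k
    have "red (2^n * Abs_z2 s) k = 2^n * s k mod 2^k"
      by (simp add: red_times red_pow2 rep mod_mult_left_eq)
    also have "\<dots> = red (x - y) k"
      by (simp add: dvd[symmetric] red_mod_le)
    finally show "red (x - y) k = red (2^n * Abs_z2 s) k" ..
  qed
  then show "(2::z2)^n dvd (x - y)" ..
qed

lemma mem_ball2_iff: "x \<in> ball2 c n \<longleftrightarrow> (2::z2)^n dvd (x - c)"
  by (simp add: ball2_def red_eq_iff_dvd)

text \<open>\<open>z2\<close> is not a \<open>semiring_parity\<close>; the odd elements are exactly its units.\<close>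
definition odd2 :: "z2 \<Rightarrow> bool" where
  "odd2 u \<longleftrightarrow> \<not> (2::z2) dvd u"

lemma odd2_iff: "odd2 u \<longleftrightarrow> (\<exists>t. u = 1 + 2 * t)"
proof -
  have "red u 1 = 0 \<or> red u 1 = 1"
    using red_range[of u 1] by auto
  moreover have "red 0 1 = 0" "red 1 1 = 1"
    using red_of_int[of 0 1] red_of_int[of 1 1] by simp_all
  ultimately have "odd2 u \<longleftrightarrow> 2 dvd (u - 1)"
    using red_eq_iff_dvd[of u 1 0] red_eq_iff_dvd[of u 1 1] unfolding odd2_def by auto
  also have "\<dots> \<longleftrightarrow> (\<exists>t. u = 1 + 2 * t)"
    by (metis add.commute diff_add_cancel dvd_def add_diff_cancel_left')
  finally show ?thesis .
qed

lemma odd2_one_plus_even: "odd2 (1 + 2 * t)"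
  using odd2_iff by blast

lemma odd2_mult: "odd2 u \<Longrightarrow> odd2 w \<Longrightarrow> odd2 (u * w)"
proof -
  assume "odd2 u" "odd2 w"
  then obtain t s where "u = 1 + 2 * t" "w = 1 + 2 * s" using odd2_iff by meson
  then have "u * w = 1 + 2 * (t + s + 2 * t * s)" by (simp add: algebra_simps)
  then show ?thesis by (metis odd2_one_plus_even)
qed

lemma pow_dvd_pow_mult_odd_iff: "odd2 u \<Longrightarrow> (2::z2)^k dvd 2^b * u \<longleftrightarrow> k \<le> b"
proof
  assume u: "odd2 u" and dvd: "2^k dvd 2^b * u"
  obtain t where t: "u = 1 + 2 * t" using u odd2_iff by blast
  show "k \<le> b"
  proof (rule ccontr)
    assume "\<not> k \<le> b"
    then have "(2::z2)^Suc b dvd 2^b * u"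
      using dvd by (meson dvd_trans le_imp_power_dvd not_less_eq_eq)
    then have "red (2^b * u) (Suc b) = 0"
      using red_eq_iff_dvd[of "2^b * u" "Suc b" 0] red_of_int[of 0] by simp
    moreover have "red ((2::z2)^b * u) (Suc b) = red ((2::z2)^b) (Suc b)"
      unfolding red_eq_iff_dvd t by (simp add: algebra_simps)
    ultimately show False by (simp add: red_pow2)
  qed
qed (simp add: le_imp_power_dvd)

lemma pow_mult_odd_nonzero: "odd2 u \<Longrightarrow> (2::z2)^b * u \<noteq> 0"
  using pow_dvd_pow_mult_odd_iff[of u "Suc b" b] by auto

lemma odd2_nonzero: "odd2 u \<Longrightarrow> u \<noteq> 0"
  using pow_mult_odd_nonzero[of u 0] by simp

lemma odd_part_exists: "x \<noteq> (0::z2) \<Longrightarrow> \<exists>b u. x = 2^b * u \<and> odd2 u"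
proof -
  assume "x \<noteq> 0"
  then obtain N where "red x N \<noteq> red 0 N" using red_inject' by blast
  then have "\<not> (2::z2)^N dvd x" using red_eq_iff_dvd[of x N 0] by simp
  then show ?thesis
  proof (induction N arbitrary: x)
    case (Suc N)
    show ?case
    proof (cases "odd2 x")
      case False
      then obtain y where y: "x = 2 * y" by (auto simp: odd2_def)
      with Suc.prems have "\<not> 2^N dvd y" by (auto simp: mult_dvd_mono)
      with Suc.IH y show ?thesis by (metis mult.assoc power_Suc)
    qed (intro exI[of _ 0] exI[of _ x], simp)
  qed simp
qed

instance z2 :: idom
proof
  fix x y :: z2
  assume "x \<noteq> 0" "y \<noteq> 0"
  then obtain a u b w where "x = 2^a * u" "odd2 u" "y = 2^b * w" "odd2 w"
    using odd_part_exists by meson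
  then show "x * y \<noteq> 0"
    using pow_mult_odd_nonzero[OF odd2_mult, of u w "a + b"] by (simp add: power_add ac_simps)
qed

lemma v2_pow_mult_odd: "odd2 u \<Longrightarrow> v2 (2^b * u) = b"
  unfolding v2_def using pow_dvd_pow_mult_odd_iff by (intro Greatest_equality) auto

lemma v2_odd_part: "x \<noteq> 0 \<Longrightarrow> \<exists>u. odd2 u \<and> x = 2^v2 x * u"
  using odd_part_exists v2_pow_mult_odd by metis

lemma v2_eq_iff: "x \<noteq> 0 \<and> v2 x = a \<longleftrightarrow> (\<exists>u. odd2 u \<and> x = 2^a * u)"
  using v2_odd_part v2_pow_mult_odd pow_mult_odd_nonzero by metis

lemma pow_dvd_iff_le_v2: "x \<noteq> 0 \<Longrightarrow> (2::z2)^k dvd x \<longleftrightarrow> k \<le> v2 x"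
  using v2_odd_part pow_dvd_pow_mult_odd_iff by metis

lemma v2_mult: "x \<noteq> 0 \<Longrightarrow> y \<noteq> 0 \<Longrightarrow> v2 (x * y) = v2 x + v2 y"
proof -
  assume "x \<noteq> 0" "y \<noteq> 0"
  then obtain a b u w where u: "odd2 u" "x = 2^a * u" and w: "odd2 w" "y = 2^b * w"
    using odd_part_exists by meson
  have "x * y = 2^(a + b) * (u * w)"
    unfolding u(2) w(2) by (simp add: power_add ac_simps)
  then have "v2 (x * y) = a + b"
    using v2_pow_mult_odd odd2_mult u(1) w(1) by metis
  moreover have "v2 x = a" "v2 y = b"
    using u w v2_pow_mult_odd by auto
  ultimately show ?thesis by simp
qed

lemma v2_uminus [simp]: "v2 (- x) = v2 x"
  by (simp add: v2_def)

lemma v2_pow2 [simp]: "v2 ((2::z2)^k) = k"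
  using v2_pow_mult_odd[of 1 k] odd2_one_plus_even[of 0] by simp

lemma v2_odd: "odd2 u \<Longrightarrow> v2 u = 0"
  using v2_pow_mult_odd[of u 0] by simp

lemma v2_add_less:
  assumes "x \<noteq> 0" "y \<noteq> 0" "v2 x < v2 y"
  shows "x + y \<noteq> 0 \<and> v2 (x + y) = v2 x"
proof -
  obtain a b u w where u: "odd2 u" "x = 2^a * u" and w: "odd2 w" "y = 2^b * w"
    using assms(1,2) odd_part_exists by meson
  obtain t where t: "u = 1 + 2 * t" using u(1) odd2_iff by blast
  have a: "v2 x = a" and "v2 y = b"
    using u w v2_pow_mult_odd by auto
  with assms(3) have ab: "a < b" by simp
  have "b = a + Suc (b - a - 1)" using ab by simp
  then have "(2::z2)^b = 2^a * 2^Suc (b - a - 1)" by (metis power_add)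
  then have "x + y = 2^a * (1 + 2 * (t + 2^(b - a - 1) * w))"
    unfolding u(2) w(2) t by (simp add: algebra_simps)
  then show ?thesis
    using v2_eq_iff odd2_one_plus_even a by metis
qed

lemma v2_diff_gt:
  assumes "x \<noteq> 0" "y \<noteq> 0" "x \<noteq> y" "v2 x = v2 y"
  shows "v2 x < v2 (x - y)"
proof -
  obtain a u w where u: "odd2 u" "x = 2^a * u" and w: "odd2 w" "y = 2^a * w"
    using assms(1,2,4) v2_odd_part by metis
  have a: "v2 x = a" using u v2_pow_mult_odd by simp
  obtain t s where "u = 1 + 2 * t" "w = 1 + 2 * s" using u(1) w(1) odd2_iff by meson
  then have "x - y = 2^Suc a * (t - s)"
    unfolding u(2) w(2) by (simp add: algebra_simps)
  then have "(2::z2)^Suc a dvd x - y" by simp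
  then show ?thesis
    using pow_dvd_iff_le_v2[of "x - y" "Suc a"] assms(3) a by simp
qed

lemma mem_ball2_shift: "x \<in> ball2 (d + c) n \<longleftrightarrow> x - d \<in> ball2 c n"
  by (simp add: mem_ball2_iff diff_diff_eq)

lemma of_int_mem_ball2: "of_int y \<in> ball2 c n \<longleftrightarrow> y mod 2^n = red c n"
  by (simp add: ball2_def red_of_int)

lemma mem_ball2_pow_iff: "x \<in> ball2 (2^a) (Suc a) \<longleftrightarrow> x \<noteq> 0 \<and> v2 x = a"
proof
  assume "x \<in> ball2 (2^a) (Suc a)"
  then obtain s where "x - 2^a = 2^Suc a * s" by (auto simp: mem_ball2_iff)
  then have "x = 2^Suc a * s + 2^a" by (simp only: diff_eq_eq)
  then have "x = 2^a * (1 + 2 * s)" by (simp add: algebra_simps)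
  then show "x \<noteq> 0 \<and> v2 x = a" using v2_eq_iff odd2_one_plus_even by blast
next
  assume "x \<noteq> 0 \<and> v2 x = a"
  then obtain t where "x = 2^a * (1 + 2 * t)" using v2_eq_iff odd2_iff by metis
  then have "x - 2^a = 2^Suc a * t" by (simp add: algebra_simps)
  then show "x \<in> ball2 (2^a) (Suc a)" by (simp add: mem_ball2_iff)
qed

lemma mem_ball2_shift_pow_iff:
  assumes "0 < n"
  shows "x \<in> ball2 (d + 2^(n-1)) n \<longleftrightarrow> x \<noteq> d \<and> Suc (v2 (x - d)) = n"
proof -
  from assms obtain k where n: "n = Suc k" by (cases n) auto
  show ?thesis unfolding n mem_ball2_shift by (simp add: mem_ball2_pow_iff)
qed

lemma UN_ball2_pow:
  assumes "0 \<notin> A"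
  shows "(\<Union>n\<in>A. ball2 (d + 2^(n-1)) n) = {x. x \<noteq> d \<and> Suc (v2 (x - d)) \<in> A}"
proof (rule set_eqI)
  fix x
  have "x \<in> ball2 (d + 2^(n-1)) n \<longleftrightarrow> x \<noteq> d \<and> Suc (v2 (x - d)) = n" if "n \<in> A" for n
    using that assms by (intro mem_ball2_shift_pow_iff) (cases n, auto)
  then show "x \<in> (\<Union>n\<in>A. ball2 (d + 2^(n-1)) n) \<longleftrightarrow> x \<in> {x. x \<noteq> d \<and> Suc (v2 (x - d)) \<in> A}"
    unfolding UN_iff mem_Collect_eq by metis
qed

lemma disjoint_family_on_ball2_pow:
  assumes "0 \<notin> A"
  shows "disjoint_family_on (\<lambda>n. ball2 (d + 2^(n-1)) n) A"
  unfolding disjoint_family_on_def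
proof (intro ballI impI)
  fix k n assume "k \<in> A" "n \<in> A" "k \<noteq> n"
  with assms have "0 < k" "0 < n" by (auto intro: gr0I)
  have False if "x \<in> ball2 (d + 2^(k-1)) k" "x \<in> ball2 (d + 2^(n-1)) n" for x
    using that \<open>k \<noteq> n\<close> mem_ball2_shift_pow_iff[OF \<open>0 < k\<close>] mem_ball2_shift_pow_iff[OF \<open>0 < n\<close>]
    by simp
  then show "ball2 (d + 2^(k-1)) k \<inter> ball2 (d + 2^(n-1)) n = {}" by blast
qed

lemma funpow_not_fixed_below_pow2:
  assumes period: "(g ^^ 2^e) a = a" and half: "0 < e \<Longrightarrow> (g ^^ 2^(e-1)) a \<noteq> a"
    and d: "0 < d" "d < 2^e"
  shows "(g ^^ d) a \<noteq> a"
proof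
  assume "(g ^^ d) a = a"
  define P where "P p \<longleftrightarrow> 0 < p \<and> (g ^^ p) a = a" for p
  define p where "p = (LEAST p. P p)"
  have "P d" using d \<open>(g ^^ d) a = a\<close> unfolding P_def by simp
  then have p: "0 < p" "(g ^^ p) a = a" and "p \<le> d"
    using LeastI[of P d] Least_le[of P d] unfolding p_def P_def by simp_all
  have "(g ^^ (2^e mod p)) a = a"
    using funpow_mod_eq[OF p(2)] period by simp
  moreover have "\<not> P (2^e mod p)"
    using not_less_Least[of "2^e mod p" P] p(1) unfolding p_def[symmetric] by simp
  ultimately have "p dvd 2^e" unfolding P_def by (simp add: dvd_eq_mod_eq_0)
  then obtain i where i: "i \<le> e" "p = 2^i"
    using divides_primepow_nat[OF two_is_prime_nat] by blast
  with \<open>p \<le> d\<close> d have "i < e" by (metis le_less_trans le_neq_implies_less nat_less_le)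
  then have "2^(e-1) mod p = 0"
    using i(2) by (simp add: le_imp_power_dvd flip: dvd_eq_mod_eq_0)
  then have "(g ^^ 2^(e-1)) a = a"
    using funpow_mod_eq[OF p(2), of "2^(e-1)"] by simp
  with half \<open>i < e\<close> show False by simp
qed

lemma range_funpow_periodic:
  assumes "(g ^^ p) a = a" "0 < p"
  shows "range (\<lambda>i. (g ^^ i) a) = (\<lambda>i. (g ^^ i) a) ` {..<p}"
proof (intro equalityI subsetI)
  fix t assume "t \<in> range (\<lambda>i. (g ^^ i) a)"
  then obtain i where "t = (g ^^ i) a" by blast
  then have "t = (g ^^ (i mod p)) a" using funpow_mod_eq[OF assms(1)] by simp
  with assms(2) show "t \<in> (\<lambda>i. (g ^^ i) a) ` {..<p}" by simp
qed blast

lemma is_cycle_eq_range: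
  assumes "is_cycle g T" "y \<in> T"
  shows "T = range (\<lambda>i. (g ^^ i) y)"
proof -
  obtain z where z: "(g ^^ card T) z = z" "T = (\<lambda>i. (g ^^ i) z) ` {..<card T}"
    using assms(1) unfolding is_cycle_def by blast
  have "0 < card T" using assms(1) unfolding is_cycle_def by auto
  with z have T: "T = range (\<lambda>i. (g ^^ i) z)" using range_funpow_periodic by metis
  obtain i where i: "i < card T" "y = (g ^^ i) z" using assms(2) z(2) by auto
  have zy: "(g ^^ j) z = (g ^^ (j + (card T - i))) y" for j
  proof -
    have "(g ^^ j) z = (g ^^ (j + card T)) z"
      using z(1) by (simp add: funpow_add)
    also have "j + card T = (j + (card T - i)) + i"
      using i(1) by simp
    finally show ?thesis
      unfolding i(2) by (simp only: funpow_add comp_apply)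
  qed
  have yz: "(g ^^ j) y = (g ^^ (j + i)) z" for j
    using i(2) by (simp add: funpow_add)
  show ?thesis
    unfolding T
  proof (intro equalityI subsetI)
    fix t assume "t \<in> range (\<lambda>j. (g ^^ j) z)"
    then obtain j where "t = (g ^^ j) z" by blast
    then show "t \<in> range (\<lambda>j. (g ^^ j) y)" using zy rangeI by metis
  next
    fix t assume "t \<in> range (\<lambda>j. (g ^^ j) y)"
    then obtain j where "t = (g ^^ j) y" by blast
    then show "t \<in> range (\<lambda>j. (g ^^ j) z)" using yz rangeI by metis
  qed
qed

definition fiber :: "nat \<Rightarrow> nat \<Rightarrow> int \<Rightarrow> int set" where
  "fiber N K a = {b \<in> {0..<2^N}. b mod 2^K = a mod 2^K}"

lemma finite_fiber: "finite (fiber N K a)"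
  by (rule finite_subset[of _ "{0..<2^N}"]) (auto simp: fiber_def)

lemma card_fiber:
  assumes "K \<le> N"
  shows "card (fiber N K a) = 2^(N-K)"
proof -
  define r where "r = a mod 2^K"
  have r: "0 \<le> r" "r < 2^K" unfolding r_def by simp_all
  have pow: "(2::int)^N = 2^K * 2^(N-K)" using assms by (simp flip: power_add)
  have "fiber N K a = (\<lambda>t. r + 2^K * t) ` {0..<2^(N-K)}"
  proof (intro equalityI subsetI)
    fix b assume "b \<in> fiber N K a"
    then have b: "0 \<le> b" "b < 2^K * 2^(N-K)" "b mod 2^K = r"
      unfolding fiber_def r_def pow by auto
    have e: "b = r + 2^K * (b div 2^K)"
      using b(3) div_mult_mod_eq[of b "2^K"] by (simp add: algebra_simps)
    with r b(2) have "2^K * (b div 2^K) < 2^K * 2^(N-K)" by linarith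
    then have "b div 2^K < 2^(N-K)" by simp
    moreover have "0 \<le> b div 2^K" using b(1) by (simp add: pos_imp_zdiv_nonneg_iff)
    ultimately show "b \<in> (\<lambda>t. r + 2^K * t) ` {0..<2^(N-K)}"
      using e by (intro image_eqI[of _ _ "b div 2^K"]) simp_all
  next
    fix b assume "b \<in> (\<lambda>t. r + 2^K * t) ` {0..<2^(N-K)}"
    then obtain t where t: "0 \<le> t" "t + 1 \<le> 2^(N-K)" "b = r + 2^K * t" by auto
    then have "2^K * (t + 1) \<le> (2::int)^N" unfolding pow by (intro mult_left_mono) simp_all
    with r t have "0 \<le> b" "b < 2^N" by (simp_all add: algebra_simps)
    moreover have "b mod 2^K = a mod 2^K" using t(3) unfolding r_def by simp
    ultimately show "b \<in> fiber N K a" unfolding fiber_def by simp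
  qed
  moreover have "inj_on (\<lambda>t. r + 2^K * t) {0..<(2::int)^(N-K)}" by (rule inj_onI) simp
  ultimately show ?thesis by (simp add: card_image nat_power_eq)
qed

lemma lift_set_fiber: "K \<le> N \<Longrightarrow> lift_set N (fiber N K a) = fiber (Suc N) K a"
  unfolding lift_set_def fiber_def by (auto simp: mod_mod_cancel le_imp_power_dvd)

lemma lift_set_singleton:
  assumes "0 \<le> y" "y < 2^N"
  shows "lift_set N {y} = {y, y + 2^N}"
proof (intro equalityI subsetI)
  fix z assume "z \<in> lift_set N {y}"
  then have z: "0 \<le> z" "z < 2 * 2^N" "z mod 2^N = y" unfolding lift_set_def by auto
  show "z \<in> {y, y + 2^N}"
  proof (cases "z < 2^N")
    case False
    then have "(z - 2^N) mod 2^N = z - 2^N" using z(2) by (intro mod_pos_pos_trivial) simp_all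
    with z(3) show ?thesis by simp
  qed (use z in simp)
qed (use assms in \<open>auto simp: lift_set_def\<close>)

locale lipschitz_z2 =
  fixes f :: "z2 \<Rightarrow> z2"
  assumes lipschitz: "(2::z2)^N dvd (x - y) \<Longrightarrow> 2^N dvd (f x - f y)"
begin

lemma induced_red: "induced f N (red x N) = red (f x) N"
proof -
  have "red (of_int (red x N)) N = red x N" by (simp add: red_of_int)
  then show ?thesis unfolding induced_def red_eq_iff_dvd by (rule lipschitz)
qed

lemma funpow_induced_red: "(induced f N ^^ i) (red x N) = red ((f ^^ i) x) N"
  by (induction i) (simp_all add: induced_red)

end

locale typeI_ball = lipschitz_z2 +
  fixes c :: z2 and n K :: nat
  assumes displacement: "x \<in> ball2 c n \<Longrightarrow> f x \<noteq> x \<and> v2 (f x - x) = K"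
    and derivative: "x \<in> ball2 c n \<Longrightarrow> y \<in> ball2 c n \<Longrightarrow> \<exists>t. f y - f x = (y - x) * (1 + 4 * t)"
    and radius_le: "n \<le> K"
begin

lemma pow_dvd_displacement: "x \<in> ball2 c n \<Longrightarrow> M \<le> K \<Longrightarrow> (2::z2)^M dvd (f x - x)"
  using displacement pow_dvd_iff_le_v2 by simp

lemma maps_ball2: "x \<in> ball2 c n \<Longrightarrow> f x \<in> ball2 c n"
proof -
  assume x: "x \<in> ball2 c n"
  have "(2::z2)^n dvd (f x - x) + (x - c)"
    by (rule dvd_add[OF pow_dvd_displacement[OF x radius_le]]) (use x in \<open>simp add: mem_ball2_iff\<close>)
  moreover have "(f x - x) + (x - c) = f x - c" by simp
  ultimately show ?thesis by (simp add: mem_ball2_iff)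
qed

lemma funpow_maps_ball2: "x \<in> ball2 c n \<Longrightarrow> (f ^^ i) x \<in> ball2 c n"
  by (induction i) (simp_all add: maps_ball2)

lemma pow_dvd_funpow_displacement: "x \<in> ball2 c n \<Longrightarrow> (2::z2)^K dvd ((f ^^ i) x - x)"
proof (induction i)
  case (Suc i)
  have "(f ^^ Suc i) x - x = (f ((f ^^ i) x) - (f ^^ i) x) + ((f ^^ i) x - x)" by simp
  with Suc show ?case
    using pow_dvd_displacement[OF funpow_maps_ball2] by (metis dvd_add order_refl)
qed simp

lemma funpow_derivative:
  "x \<in> ball2 c n \<Longrightarrow> y \<in> ball2 c n \<Longrightarrow> \<exists>t. (f ^^ i) y - (f ^^ i) x = (y - x) * (1 + 4 * t)"
proof (induction i)
  case 0
  show ?case by (intro exI[of _ 0]) simp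
next
  case (Suc i)
  then obtain t where t: "(f ^^ i) y - (f ^^ i) x = (y - x) * (1 + 4 * t)" by blast
  obtain s where "f ((f ^^ i) y) - f ((f ^^ i) x) = ((f ^^ i) y - (f ^^ i) x) * (1 + 4 * s)"
    using derivative funpow_maps_ball2 Suc.prems by blast
  then have "(f ^^ Suc i) y - (f ^^ Suc i) x = (y - x) * (1 + 4 * (t + s + 4 * t * s))"
    unfolding t by (simp add: algebra_simps)
  then show ?case by blast
qed

text \<open>Each squaring of the iterate doubles the displacement up to a unit,
  since the derivative is \<open>1 mod 4\<close>.\<close>
lemma funpow_pow2_displacement:
  "x \<in> ball2 c n \<Longrightarrow> (f ^^ 2^j) x \<noteq> x \<and> v2 ((f ^^ 2^j) x - x) = K + j"
proof (induction j)
  case 0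
  then show ?case using displacement by simp
next
  case (Suc j)
  define g where "g = f ^^ 2^j"
  have gg: "f ^^ 2^Suc j = g \<circ> g" unfolding g_def by (simp flip: funpow_add mult_2)
  obtain t where t: "g (g x) - g x = (g x - x) * (1 + 4 * t)"
    using funpow_derivative[OF Suc.prems funpow_maps_ball2[OF Suc.prems]] unfolding g_def by blast
  define D where "D = g x - x"
  have D: "D \<noteq> 0" "v2 D = K + j"
    using Suc unfolding g_def D_def by simp_all
  have odd: "odd2 (1 + 2 * t)" by (rule odd2_one_plus_even)
  have two: "(2::z2) \<noteq> 0" "v2 (2::z2) = 1"
    using v2_pow2[of 1] pow_mult_odd_nonzero[of 1 1] odd2_one_plus_even[of 0] by simp_all
  have "(f ^^ 2^Suc j) x - x = (2 * D) * (1 + 2 * t)"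
    using t unfolding gg D_def by (simp add: algebra_simps)
  moreover have "v2 ((2 * D) * (1 + 2 * t)) = v2 2 + v2 D + v2 (1 + 2 * t)"
    using D two odd2_nonzero[OF odd] by (simp add: v2_mult)
  moreover have "(2 * D) * (1 + 2 * t) \<noteq> 0"
    using D two odd2_nonzero[OF odd] by simp
  ultimately show ?case
    using D two v2_odd[OF odd] by auto
qed

lemma induced_fixed: "x \<in> ball2 c n \<Longrightarrow> N \<le> K \<Longrightarrow> induced f N (red x N) = red x N"
  using pow_dvd_displacement by (simp add: induced_red red_eq_iff_dvd)

lemma level_cycle_singleton:
  assumes "0 \<le> y" "y < 2^N" "y mod 2^n = red c n" "N \<le> K"
  shows "level_cycle f N {y}"
proof -
  have "of_int y \<in> ball2 c n" "red (of_int y) N = y"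
    using assms by (simp_all add: of_int_mem_ball2 red_of_int)
  then have "induced f N y = y" using induced_fixed assms(4) by metis
  with assms(1,2) show ?thesis unfolding level_cycle_def is_cycle_def by auto
qed

lemma induced_period:
  assumes "x \<in> ball2 c n" "K \<le> N"
  shows "(induced f N ^^ 2^(N-K)) (red x N) = red x N"
  using funpow_pow2_displacement[OF assms(1), of "N - K"] assms(2)
  by (simp add: funpow_induced_red red_eq_iff_dvd pow_dvd_iff_le_v2)

lemma induced_not_half_period:
  assumes "x \<in> ball2 c n" "K < N"
  shows "(induced f N ^^ 2^(N-K-1)) (red x N) \<noteq> red x N"
  using funpow_pow2_displacement[OF assms(1), of "N - K - 1"] assms(2)
  by (simp add: funpow_induced_red red_eq_iff_dvd pow_dvd_iff_le_v2)

lemma induced_orbit_eq_fiber: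
  assumes x: "x \<in> ball2 c n" and "K \<le> N"
  shows "(\<lambda>i. (induced f N ^^ i) (red x N)) ` {..<2^(N-K)} = fiber N K (red x N)"
proof (rule card_subset_eq[OF finite_fiber])
  show "(\<lambda>i. (induced f N ^^ i) (red x N)) ` {..<2^(N-K)} \<subseteq> fiber N K (red x N)"
  proof (rule image_subsetI)
    fix i
    have "red ((f ^^ i) x) K = red x K"
      using pow_dvd_funpow_displacement[OF x] by (simp add: red_eq_iff_dvd)
    then show "(induced f N ^^ i) (red x N) \<in> fiber N K (red x N)"
      using red_range[of "(f ^^ i) x" N] \<open>K \<le> N\<close>
      by (simp add: fiber_def funpow_induced_red red_mod_le)
  qed
  have "inj_on (\<lambda>i. (induced f N ^^ i) (red x N)) {0..<2^(N-K)}"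
  proof (rule inj_on_funpow_least)
    show "(induced f N ^^ 2^(N-K)) (red x N) = red x N" by (rule induced_period[OF assms])
    have half: "(induced f N ^^ 2^(N-K-1)) (red x N) \<noteq> red x N" if "0 < N - K"
      using induced_not_half_period[OF x] that by simp
    fix m :: nat assume "0 < m" "m < 2^(N-K)"
    then show "(induced f N ^^ m) (red x N) \<noteq> red x N"
      using funpow_not_fixed_below_pow2[OF induced_period[OF assms] half] by blast
  qed
  then show "card ((\<lambda>i. (induced f N ^^ i) (red x N)) ` {..<2^(N-K)}) = card (fiber N K (red x N))"
    using card_fiber[OF \<open>K \<le> N\<close>] by (simp add: card_image lessThan_atLeast0)
qed

lemma level_cycle_fiber:
  assumes "x \<in> ball2 c n" "K \<le> N"
  shows "level_cycle f N (fiber N K (red x N))"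
proof -
  have "red x N \<in> fiber N K (red x N)"
    using red_range[of x N] by (simp add: fiber_def)
  then show ?thesis
    unfolding level_cycle_def is_cycle_def card_fiber[OF assms(2)]
    using induced_period[OF assms] induced_orbit_eq_fiber[OF assms] finite_fiber
    by (auto simp: fiber_def)
qed

lemma level_cycle_above_center:
  assumes "level_cycle f N T" "\<forall>y\<in>T. y mod 2^n \<in> {red c n}"
  obtains y where "y \<in> T" "0 \<le> y" "y < 2^N" "of_int y \<in> ball2 c n" "red (of_int y) N = y"
proof -
  obtain y where "y \<in> T" using assms(1) unfolding level_cycle_def is_cycle_def by blast
  with assms show ?thesis
    using that by (auto simp: level_cycle_def of_int_mem_ball2 red_of_int)
qed

lemma splits_below:
  assumes "N < K" "n \<le> N" "level_cycle f N T" "\<forall>y\<in>T. y mod 2^n \<in> {red c n}"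
  shows "splits f N T"
proof -
  obtain y where y: "y \<in> T" "0 \<le> y" "y < 2^N" "of_int y \<in> ball2 c n" "red (of_int y) N = y"
    using level_cycle_above_center[OF assms(3,4)] .
  have fixed: "induced f N y = y" using induced_fixed[OF y(4), of N] assms(1) y(5) by simp
  have "(induced f N ^^ i) y = y" for i by (induction i) (simp_all add: fixed)
  moreover have "T = range (\<lambda>i. (induced f N ^^ i) y)"
    using is_cycle_eq_range[OF _ y(1)] assms(3) unfolding level_cycle_def by blast
  ultimately have T: "T = {y}" by simp
  have "(y + 2^N) mod 2^n = y mod 2^n"
    using le_imp_power_dvd[OF assms(2), of "2::int"] by (auto elim!: dvdE)
  with y(4) have ym: "y mod 2^n = red c n" "(y + 2^N) mod 2^n = red c n"
    by (simp_all add: of_int_mem_ball2)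
  have "level_cycle f (Suc N) {y}" "level_cycle f (Suc N) {y + 2^N}"
    using y(2,3) ym assms(1) by (simp_all add: level_cycle_singleton)
  moreover have "lift_set N T = {y} \<union> {y + 2^N}"
    unfolding T using lift_set_singleton[OF y(2,3)] by auto
  ultimately show ?thesis
    unfolding splits_def T by (intro exI[of _ "{y}"] exI[of _ "{y + 2^N}"]) auto
qed

lemma grows_above:
  assumes "K \<le> N" "level_cycle f N T" "\<forall>y\<in>T. y mod 2^n \<in> {red c n}"
  shows "grows f N T"
proof -
  obtain y where y: "y \<in> T" "0 \<le> y" "y < 2^N" "of_int y \<in> ball2 c n" "red (of_int y) N = y"
    using level_cycle_above_center[OF assms(2,3)] .
  have "T = range (\<lambda>i. (induced f N ^^ i) y)"
    using is_cycle_eq_range[OF _ y(1)] assms(2) unfolding level_cycle_def by blast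
  also have "\<dots> = fiber N K y"
    using range_funpow_periodic[OF induced_period[OF y(4) assms(1)]]
      induced_orbit_eq_fiber[OF y(4) assms(1)] y(5) by simp
  finally have T: "T = fiber N K y" .
  have "red (of_int y) (Suc N) = y" using y(2,3) by (simp add: red_of_int)
  then have "level_cycle f (Suc N) (fiber (Suc N) K y)"
    using level_cycle_fiber[OF y(4), of "Suc N"] assms(1) by simp
  then show ?thesis
    unfolding grows_def T lift_set_fiber[OF assms(1)]
    using assms(1) by (simp add: card_fiber Suc_diff_le)
qed

theorem typeI: "typeI f c n (K - n)"
proof -
  have "c \<in> ball2 c n" by (simp add: ball2_def)
  then show ?thesis
    unfolding typeI_def splits_then_grows_def
    using induced_fixed radius_le splits_below grows_above by auto
qed

end

lemma mem_ball2_0_1_iff: "x \<in> ball2 0 1 \<longleftrightarrow> x = 0 \<or> 1 \<le> v2 x"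
  using pow_dvd_iff_le_v2[of x 1] by (auto simp: mem_ball2_iff)

lemma v2_add_eq_of_less:
  assumes "d \<noteq> 0" "x \<noteq> d" "v2 d < v2 (x - d)"
  shows "x \<noteq> 0 \<and> v2 x = v2 d"
  using v2_add_less[of d "x - d"] assms by simp

lemma ball2_even_partition:
  fixes d :: z2
  assumes "d \<noteq> 0" "1 \<le> v2 d"
  defines "S1 \<equiv> {x. x \<noteq> 0 \<and> 1 \<le> v2 x \<and> v2 x < v2 d}"
    and "S2 \<equiv> {x. x \<noteq> 0 \<and> v2 d < v2 x}"
    and "S3 \<equiv> {x. x \<noteq> d \<and> v2 d < v2 (x - d)}"
  shows "ball2 0 1 = {0, d} \<union> S1 \<union> S2 \<union> S3 \<and> {0, d} \<inter> S1 = {} \<and> {0, d} \<inter> S2 = {}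
    \<and> {0, d} \<inter> S3 = {} \<and> S1 \<inter> S2 = {} \<and> S1 \<inter> S3 = {} \<and> S2 \<inter> S3 = {}"
proof -
  have S3: "x \<noteq> 0 \<and> v2 x = v2 d" if "x \<in> S3" for x
    using v2_add_eq_of_less[OF assms(1)] that unfolding S3_def by blast
  have cover: "x \<in> {0, d} \<union> S1 \<union> S2 \<union> S3" if "x \<noteq> 0" "1 \<le> v2 x" for x
  proof (cases "x = d")
    case False
    with v2_diff_gt[of x d] that assms(1) show ?thesis
      unfolding S1_def S2_def S3_def by (cases "v2 x" "v2 d" rule: linorder_cases) auto
  qed simp
  have "ball2 0 1 = {0, d} \<union> S1 \<union> S2 \<union> S3"
  proof (rule set_eqI)
    fix x
    show "x \<in> ball2 0 1 \<longleftrightarrow> x \<in> {0, d} \<union> S1 \<union> S2 \<union> S3"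
      unfolding mem_ball2_0_1_iff using cover[of x] S3[of x] assms(2)
      unfolding S1_def S2_def by auto
  qed
  moreover have "S1 \<inter> S3 = {}" "S2 \<inter> S3 = {}"
    using S3 unfolding S1_def S2_def by force+
  moreover have "{0, d} \<inter> S3 = {}"
    using S3[of 0] unfolding S3_def by blast
  moreover have "{0, d} \<inter> S1 = {}" "{0, d} \<inter> S2 = {}" "S1 \<inter> S2 = {}"
    unfolding S1_def S2_def by auto
  ultimately show ?thesis by blast
qed

lemma quadratic_diff:
  "(x^2 + (1 - d) * x) - (y^2 + (1 - d) * y) = (x - y) * (x + y + 1 - (d::z2))"
  by (simp add: algebra_simps power2_eq_square)

lemma lipschitz_z2_quadratic: "lipschitz_z2 (\<lambda>x. x^2 + (1 - d) * x)"
  by unfold_locales (simp only: quadratic_diff dvd_mult2)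

lemma quadratic_fixed_points: "{x. x^2 + (1 - d) * x = x} = {0, d::z2}"
proof -
  have "x^2 + (1 - d) * x - x = x * (x - d)" for x
    by (simp add: algebra_simps power2_eq_square)
  then have "x^2 + (1 - d) * x = x \<longleftrightarrow> x = 0 \<or> x = d" for x
    by (metis mult_eq_0_iff right_minus_eq)
  then show ?thesis by blast
qed

lemma quadratic_maps_odd_to_even:
  assumes "(2::z2) dvd d"
  shows "(\<lambda>x. x^2 + (1 - d) * x) ` ball2 1 1 \<subseteq> ball2 0 1"
proof clarify
  fix x assume "x \<in> ball2 1 1"
  have "2 dvd (x - 1) + 2 - d"
    by (rule dvd_diff[OF dvd_add[OF _ dvd_refl] assms]) (use \<open>x \<in> ball2 1 1\<close> in \<open>simp add: mem_ball2_iff\<close>)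
  moreover have "(x - 1) + 2 - d = x + 1 - d" by simp
  ultimately have "2 dvd x * (x + 1 - d)" by (metis dvd_mult)
  moreover have "x^2 + (1 - d) * x = x * (x + 1 - d)"
    by (simp add: algebra_simps power2_eq_square)
  ultimately show "x^2 + (1 - d) * x \<in> ball2 0 1"
    by (simp add: mem_ball2_iff)
qed

lemma typeI_quadratic:
  fixes d c :: z2
  assumes "d \<noteq> 0" "2 \<le> v2 d" "2 dvd c" "2 \<le> n" "n \<le> K"
    and val: "\<And>x. x \<in> ball2 c n \<Longrightarrow> x \<noteq> 0 \<and> x \<noteq> d \<and> v2 x + v2 (x - d) = K"
  shows "typeI (\<lambda>x. x^2 + (1 - d) * x) c n (K - n)"
proof -
  have "typeI_ball (\<lambda>x. x^2 + (1 - d) * x) c n K"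
  proof (intro typeI_ball.intro typeI_ball_axioms.intro lipschitz_z2_quadratic)
    fix x assume x: "x \<in> ball2 c n"
    have "x^2 + (1 - d) * x - x = x * (x - d)"
      by (simp add: algebra_simps power2_eq_square)
    with val[OF x] show "x^2 + (1 - d) * x \<noteq> x \<and> v2 (x^2 + (1 - d) * x - x) = K"
      by (metis mult_eq_0_iff right_minus_eq v2_mult)
  next
    fix x y assume "x \<in> ball2 c n" "y \<in> ball2 c n"
    then obtain s s' where xy: "x = 2^n * s + c" "y = 2^n * s' + c"
      unfolding mem_ball2_iff dvd_def diff_eq_eq by (metis mult.commute)
    have "(2::z2)^2 dvd d" using pow_dvd_iff_le_v2[of d 2] assms(1,2) by simp
    then obtain e c' where dc: "d = 4 * e" "c = 2 * c'" using assms(3) by (auto elim!: dvdE)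
    have "(2::z2)^2 dvd 2^n" using assms(4) by (rule le_imp_power_dvd)
    then obtain q where q: "(2::z2)^n = 4 * q" by (auto elim!: dvdE)
    have "x + y + 1 - d = 1 + 4 * (c' + q * (s + s') - e)"
      unfolding xy dc q by (simp add: algebra_simps)
    then show "\<exists>t. y^2 + (1 - d) * y - (x^2 + (1 - d) * x) = (y - x) * (1 + 4 * t)"
      by (simp only: quadratic_diff add.commute[of y x]) blast
  qed (use assms(5) in simp)
  then show ?thesis by (rule typeI_ball.typeI)
qed

lemma typeI_quadratic_inner:
  fixes d :: z2
  assumes "d \<noteq> 0" "2 \<le> v2 d" "2 \<le> n" "n \<le> v2 d"
  shows "typeI (\<lambda>x. x^2 + (1 - d) * x) (2^(n-1)) n (n - 2)"
proof -
  have "x \<noteq> 0 \<and> x \<noteq> d \<and> v2 x + v2 (x - d) = (n - 1) + (n - 1)" if "x \<in> ball2 (2^(n-1)) n" for x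
  proof -
    have x: "x \<noteq> 0" "Suc (v2 x) = n"
      using that mem_ball2_shift_pow_iff[of n x 0] assms(3) by simp_all
    then have "x + - d \<noteq> 0 \<and> v2 (x + - d) = v2 x"
      using v2_add_less[of x "- d"] assms(1,4) by simp
    with x show ?thesis by auto
  qed
  moreover have "2 dvd (2::z2)^(n-1)" using assms(3) by (simp add: dvd_power)
  ultimately have "typeI (\<lambda>x. x^2 + (1 - d) * x) (2^(n-1)) n ((n - 1) + (n - 1) - n)"
    using assms(3) by (intro typeI_quadratic[OF assms(1,2)]) simp_all
  moreover have "(n - 1) + (n - 1) - n = n - 2" using assms(3) by simp
  ultimately show ?thesis by simp
qed

lemma typeI_quadratic_outer:
  fixes d :: z2
  assumes "d \<noteq> 0" "2 \<le> v2 d" "v2 d + 1 < n"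
  shows "typeI (\<lambda>x. x^2 + (1 - d) * x) (2^(n-1)) n (v2 d - 1)"
proof -
  have "x \<noteq> 0 \<and> x \<noteq> d \<and> v2 x + v2 (x - d) = (n - 1) + v2 d" if "x \<in> ball2 (2^(n-1)) n" for x
  proof -
    have x: "x \<noteq> 0" "Suc (v2 x) = n"
      using that mem_ball2_shift_pow_iff[of n x 0] assms(3) by simp_all
    then have "- d + x \<noteq> 0 \<and> v2 (- d + x) = v2 d"
      using v2_add_less[of "- d" x] assms(1,3) by simp
    with x show ?thesis by auto
  qed
  moreover have "2 dvd (2::z2)^(n-1)" using assms(3) by (simp add: dvd_power)
  ultimately have "typeI (\<lambda>x. x^2 + (1 - d) * x) (2^(n-1)) n ((n - 1) + v2 d - n)"
    using assms(2,3) by (intro typeI_quadratic[OF assms(1,2)]) simp_all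
  moreover have "(n - 1) + v2 d - n = v2 d - 1" using assms(3) by simp
  ultimately show ?thesis by simp
qed

lemma typeI_quadratic_outer_shifted:
  fixes d :: z2
  assumes "d \<noteq> 0" "2 \<le> v2 d" "v2 d + 1 < n"
  shows "typeI (\<lambda>x. x^2 + (1 - d) * x) (d + 2^(n-1)) n (v2 d - 1)"
proof -
  have "x \<noteq> 0 \<and> x \<noteq> d \<and> v2 x + v2 (x - d) = v2 d + (n - 1)" if "x \<in> ball2 (d + 2^(n-1)) n" for x
  proof -
    have x: "x \<noteq> d" "Suc (v2 (x - d)) = n"
      using that mem_ball2_shift_pow_iff[of n x d] assms(3) by simp_all
    with v2_add_eq_of_less[OF assms(1)] assms(3) show ?thesis by auto
  qed
  moreover have "2 dvd d + 2^(n-1)"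
    using pow_dvd_iff_le_v2[of d 1] assms by (simp add: dvd_power)
  ultimately have "typeI (\<lambda>x. x^2 + (1 - d) * x) (d + 2^(n-1)) n (v2 d + (n - 1) - n)"
    using assms(2,3) by (intro typeI_quadratic[OF assms(1,2)]) simp_all
  moreover have "v2 d + (n - 1) - n = v2 d - 1" using assms(3) by simp
  ultimately show ?thesis by simp
qed

theorem theorem6p3:
  fixes m :: z2
  assumes "m \<noteq> 0"
  defines "f \<equiv> \<lambda>x::z2. x^2 + (1 - 4*m) * x"
  defines "E1 \<equiv> (\<Union>n\<in>{2..<v2 m + 3}. ball2 (2^(n-1)) n)"
  defines "E2 \<equiv> (\<Union>n\<in>{v2 m + 3<..}. ball2 (2^(n-1)) n)"
  defines "E3 \<equiv> (\<Union>n\<in>{v2 m + 3<..}. ball2 (4*m + 2^(n-1)) n)"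
  shows "{x. f x = x} = {0, 4*m} \<and> (0::z2) \<noteq> 4*m
    \<and> f ` ball2 1 1 \<subseteq> ball2 0 1
    \<and> ball2 0 1 = {0, 4*m} \<union> E1 \<union> E2 \<union> E3
    \<and> {0, 4*m} \<inter> E1 = {} \<and> {0, 4*m} \<inter> E2 = {} \<and> {0, 4*m} \<inter> E3 = {}
    \<and> E1 \<inter> E2 = {} \<and> E1 \<inter> E3 = {} \<and> E2 \<inter> E3 = {}
    \<and> disjoint_family_on (\<lambda>n. ball2 (2^(n-1)) n) {2..<v2 m + 3}
    \<and> disjoint_family_on (\<lambda>n. ball2 (2^(n-1)) n) {v2 m + 3<..}
    \<and> disjoint_family_on (\<lambda>n. ball2 (4*m + 2^(n-1)) n) {v2 m + 3<..}
    \<and> (\<forall>n\<in>{2..<v2 m + 3}. typeI f (2^(n-1)) n (n - 2))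
    \<and> (\<forall>n\<in>{v2 m + 3<..}. typeI f (2^(n-1)) n (v2 m + 1))
    \<and> (\<forall>n\<in>{v2 m + 3<..}. typeI f (4*m + 2^(n-1)) n (v2 m + 1))"
proof -
  have four: "(4::z2) \<noteq> 0" "v2 (4::z2) = 2"
    using pow_mult_odd_nonzero[of 1 2] v2_pow2[of 2] odd2_one_plus_even[of 0] by simp_all
  with assms(1) have d: "4 * m \<noteq> 0" "v2 (4 * m) = v2 m + 2"
    by (simp_all add: v2_mult)
  have "E1 = {x. x \<noteq> 0 \<and> 1 \<le> v2 x \<and> v2 x < v2 (4 * m)}"
    using UN_ball2_pow[of "{2..<v2 m + 3}" 0] d(2) unfolding E1_def by auto
  moreover have "E2 = {x. x \<noteq> 0 \<and> v2 (4 * m) < v2 x}"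
    using UN_ball2_pow[of "{v2 m + 3<..}" 0] d(2) unfolding E2_def by auto
  moreover have "E3 = {x. x \<noteq> 4 * m \<and> v2 (4 * m) < v2 (x - 4 * m)}"
    using UN_ball2_pow[of "{v2 m + 3<..}" "4 * m"] d(2) unfolding E3_def by auto
  moreover have "2 dvd 4 * m" by (rule dvdI[of _ _ "2 * m"]) simp
  ultimately show ?thesis
    unfolding f_def
    using quadratic_fixed_points quadratic_maps_odd_to_even ball2_even_partition[OF d(1)]
      disjoint_family_on_ball2_pow[of _ 0] disjoint_family_on_ball2_pow[of _ "4 * m"]
      typeI_quadratic_inner[OF d(1)] typeI_quadratic_outer[OF d(1)]
      typeI_quadratic_outer_shifted[OF d(1)] d
    by simp
qed

end
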